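(* For every integer $n\ge 1$, $(n-1) P_{n-1}^3=(2 P_{n}^2+(n-1) P_{2 n-1}) P_{n-1}+(n+1) P_{n} (P_{n} P_{n+1}-P_{2 n})$, where $P_k$ denotes the $k$-th Pell number.
   Context: The Pell numbers are defined by $P_0=0$, $P_1=1$, $P_k=2P_{k-1}+P_{k-2}$ for $k\ge 2$. *)

theory Defs
  imports Main
begin

fun pell :: "nat \<Rightarrow> int" where
  "pell 0 = 0"
| "pell (Suc 0) = 1"
| "pell (Suc (Suc k)) = 2 * pell (Suc k) + pell k"

end

theory Submission
  imports Defs
begin

text \<open>Write a = P(n), b = P(n-1). The addition formula P(m+n+1) = P(m+1) P(n+1) + P(m) P(n)
  gives P(2n-1) = a^2 + b^2 and P(2n) = a (P(n+1) + b), so P(n) P(n+1) - P(2n) = -ab, and the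
  claim becomes the polynomial identity (n-1) b^3 = (2a^2 + (n-1)(a^2 + b^2)) b - (n+1) a^2 b.\<close>

lemma pell_add: "pell (m + n + 1) = pell (m + 1) * pell (n + 1) + pell m * pell n"
proof (induction m rule: pell.induct)
  case (3 k)
  have "pell (Suc (Suc k) + n + 1) = 2 * pell (Suc k + n + 1) + pell (k + n + 1)"
    by simp
  with "3.IH" show ?case
    by (simp add: algebra_simps)
qed simp_all

lemma pell_odd_index: "pell (2 * m + 1) = pell (m + 1) ^ 2 + pell m ^ 2"
  using pell_add [of m m] by (simp add: mult_2 power2_eq_square)

lemma pell_even_index: "pell (2 * (m + 1)) = pell (m + 1) * (pell (m + 2) + pell m)"
proof -
  have "pell (2 * (m + 1)) = pell ((m + 1) + m + 1)"
    by (rule arg_cong [where f = pell]) simp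
  also have "\<dots> = pell (m + 1) * (pell (m + 2) + pell m)"
    unfolding pell_add by (simp add: algebra_simps)
  finally show ?thesis .
qed

theorem proposition7p5:
  fixes n :: nat
  assumes "n \<ge> 1"
  shows "(int n - 1) * pell (n - 1) ^ 3 =
         (2 * pell n ^ 2 + (int n - 1) * pell (2 * n - 1)) * pell (n - 1)
         + (int n + 1) * pell n * (pell n * pell (n + 1) - pell (2 * n))"
proof -
  obtain m where n: "n = m + 1"
    using assms by (cases n) auto
  have odd: "pell (2 * n - 1) = pell n ^ 2 + pell m ^ 2"
    using pell_odd_index [of m] by (simp add: n)
  have even: "pell n * pell (n + 1) - pell (2 * n) = - pell n * pell m"
    using pell_even_index [of m] by (simp add: n algebra_simps)
  have "n - 1 = m" and "int n - 1 = int m" and "int n + 1 = int m + 2"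
    by (simp_all add: n)
  then show ?thesis
    unfolding odd even by (simp add: algebra_simps power2_eq_square power3_eq_cube)
qed

end
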